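(* Let $V=\bigoplus_{n\in\mathbb{Z}}V_n$ be a vertex operator algebra and $M$ a subspace of $V$. (1) Suppose $V=\bigoplus_{n=n_0}^{\infty}V_n$ with $n_0<0$ and $V_{n_0}\neq 0$. Then every $v\in\bigoplus_{n=n_0}^{-1}V_n$ lies in $sr_{0,-1}(M)$; in particular $sr_{0,-1}(M)\neq\{0\}$. (2) Suppose $V$ satisfies the $C_2$-cofiniteness condition and $M\supseteq C_2(V)$. If $u\in\bigoplus_{i=1}^{k}V_i$ for some positive integer $k$, then $u\in sr_{0,-1}(M)$.
   Context: A vertex operator algebra is a $\mathbb{Z}$-graded vertex algebra $V=\bigoplus_{n\in\mathbb{Z}}V_n$ over $\mathbb{C}$ (with $Y(u,z)=\sum_n u_nz^{-n-1}$, $\mathbf{1}\in V_0$, and $u_mV_n\subseteq V_{k+n-m-1}$ for $u\in V_k$), with $\dim V_n<\infty$, $V_n=0$ for $n$ sufficiently negative, and a conformal vector $\omega\in V_2$ whose modes $L(n)$ ($Y(\omega,z)=\sum L(n)z^{-n-2}$) satisfy the Virasoro relations, $L(0)$ acts on $V_n$ as $n$, and $Y(L(-1)v,z)=\frac{d}{dz}Y(v,z)$. $C_2(V)=\operatorname{span}_{\mathbb{C}}\{u_{-2}v:u,v\in V\}$; $V$ satisfies the $C_2$-cofiniteness condition if $\dim V/C_2(V)<\infty$. Iterated products are nested to the right: $v_{n_1}\cdots v_{n_t}v=v_{n_1}(\cdots(v_{n_t}v))$. For a subspace $M\subseteq V$: $lsr_{0,-1}(M)$ is the set of $v\in V$ such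 that for every $b\in V$ there is $m\ge0$ with $b_sv_{n_1}\cdots v_{n_t}v\in M$ for all $t\ge m$ and all $s,n_1,\dots,n_t\in\{0,-1\}$. $rsr_{0,-1}(M)$ is the set of $v\in V$ such that for every $w\in V$ there is $m\ge 0$ with $(v_{n_1}\cdots v_{n_t}v)_nw\in M$ for all $t\ge m$ and all $n,n_1,\dots,n_t\in\{0,-1\}$. $sr_{0,-1}(M)=lsr_{0,-1}(M)\cap rsr_{0,-1}(M)$. *)

theory Defs
  imports "HOL-Analysis.Analysis"
begin

text \<open>Y u n v denotes the mode u_n v; vac is the vacuum,
  om the conformal vector, cc the central charge, Vg n the weight-n subspace.\<close>

definition L_op :: "('v \<Rightarrow> int \<Rightarrow> 'v \<Rightarrow> 'v) \<Rightarrow> 'v \<Rightarrow> int \<Rightarrow> 'v \<Rightarrow> 'v" where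
  "L_op Y om n v = Y om (n + 1) v"

definition is_VOA ::
  "(complex \<Rightarrow> 'v::ab_group_add \<Rightarrow> 'v) \<Rightarrow> ('v \<Rightarrow> int \<Rightarrow> 'v \<Rightarrow> 'v) \<Rightarrow> 'v \<Rightarrow> 'v
     \<Rightarrow> complex \<Rightarrow> (int \<Rightarrow> 'v set) \<Rightarrow> bool" where
  "is_VOA sc Y vac om cc Vg \<longleftrightarrow>
     vector_space sc
   \<comment> \<open>bilinearity of the modes\<close>
   \<and> (\<forall>n v. Vector_Spaces.linear sc sc (\<lambda>u. Y u n v))
   \<and> (\<forall>n u. Vector_Spaces.linear sc sc (\<lambda>v. Y u n v))
   \<comment> \<open>truncation: Y(u,z)v is a Laurent series\<close>
   \<and> (\<forall>u v. \<exists>N. \<forall>n\<ge>N. Y u n v = 0)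
   \<comment> \<open>vacuum axioms\<close>
   \<and> (\<forall>n v. Y vac n v = (if n = -1 then v else 0))
   \<and> (\<forall>u. Y u (-1) vac = u)
   \<and> (\<forall>u n. n \<ge> 0 \<longrightarrow> Y u n vac = 0)
   \<comment> \<open>Borcherds (Jacobi) identity; all sums are finite by truncation\<close>
   \<and> (\<forall>u v w p q r. \<exists>N. \<forall>K\<ge>N.
        (\<Sum>i\<in>{0..K}. sc ((of_int p) gchoose i) (Y (Y u (r + int i) v) (p + q - int i) w))
      = (\<Sum>i\<in>{0..K}. sc ((-1) ^ i * ((of_int r) gchoose i))
            (Y u (p + r - int i) (Y v (q + int i) w)
             - sc ((-1) powi r) (Y v (q + r - int i) (Y u (p + int i) w)))))
   \<comment> \<open>grading V = direct sum of the Vg n\<close>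
   \<and> (\<forall>n. module.subspace sc (Vg n))
   \<and> (\<forall>n. \<exists>F. finite F \<and> module.span sc F = Vg n)
   \<and> (\<forall>v. \<exists>!c::int \<Rightarrow> 'v. finite {n. c n \<noteq> 0} \<and> (\<forall>n. c n \<in> Vg n)
            \<and> v = (\<Sum>n\<in>{n. c n \<noteq> 0}. c n))
   \<and> (\<exists>N. \<forall>n<N. Vg n = {0})
   \<and> vac \<in> Vg 0
   \<and> (\<forall>k n m u v. u \<in> Vg k \<longrightarrow> v \<in> Vg n \<longrightarrow> Y u m v \<in> Vg (k + n - m - 1))
   \<comment> \<open>conformal vector\<close>
   \<and> om \<in> Vg 2
   \<and> (\<forall>m n v. L_op Y om m (L_op Y om n v) - L_op Y om n (L_op Y om m v)
         = sc (of_int (m - n)) (L_op Y om (m + n) v)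
           + (if m + n = 0 then sc ((of_int m ^ 3 - of_int m) / 12 * cc) v else 0))
   \<and> (\<forall>n v. v \<in> Vg n \<longrightarrow> L_op Y om 0 v = sc (of_int n) v)
   \<and> (\<forall>v n w. Y (L_op Y om (-1) v) n w = sc (- of_int n) (Y v (n - 1) w))"

definition C2 :: "(complex \<Rightarrow> 'v::ab_group_add \<Rightarrow> 'v) \<Rightarrow> ('v \<Rightarrow> int \<Rightarrow> 'v \<Rightarrow> 'v) \<Rightarrow> 'v set" where
  "C2 sc Y = module.span sc {Y u (-2) v | u v. True}"

text \<open>dim V / C2(V) < infinity, i.e. V = span F + C2(V) for some finite F.\<close>
definition C2_cofinite :: "(complex \<Rightarrow> 'v::ab_group_add \<Rightarrow> 'v) \<Rightarrow> ('v \<Rightarrow> int \<Rightarrow> 'v \<Rightarrow> 'v) \<Rightarrow> bool" where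
  "C2_cofinite sc Y \<longleftrightarrow> (\<exists>F. finite F \<and> module.span sc (F \<union> C2 sc Y) = UNIV)"

definition iter_prod :: "('v \<Rightarrow> int \<Rightarrow> 'v \<Rightarrow> 'v) \<Rightarrow> 'v \<Rightarrow> int list \<Rightarrow> 'v \<Rightarrow> 'v" where
  "iter_prod Y v ns x = foldr (\<lambda>n acc. Y v n acc) ns x"

definition lsr :: "('v \<Rightarrow> int \<Rightarrow> 'v \<Rightarrow> 'v) \<Rightarrow> 'v set \<Rightarrow> 'v set" where
  "lsr Y M = {v. \<forall>b. \<exists>m::nat. \<forall>ns s. length ns \<ge> m \<longrightarrow> set ns \<subseteq> {0, -1} \<longrightarrow> s \<in> {0, -1}
                 \<longrightarrow> Y b s (iter_prod Y v ns v) \<in> M}"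

definition rsr :: "('v \<Rightarrow> int \<Rightarrow> 'v \<Rightarrow> 'v) \<Rightarrow> 'v set \<Rightarrow> 'v set" where
  "rsr Y M = {v. \<forall>w. \<exists>m::nat. \<forall>ns n. length ns \<ge> m \<longrightarrow> set ns \<subseteq> {0, -1} \<longrightarrow> n \<in> {0, -1}
                 \<longrightarrow> Y (iter_prod Y v ns v) n w \<in> M}"

definition sr :: "('v \<Rightarrow> int \<Rightarrow> 'v \<Rightarrow> 'v) \<Rightarrow> 'v set \<Rightarrow> 'v set" where
  "sr Y M = lsr Y M \<inter> rsr Y M"

end

theory Submission
  imports Defs
begin

(*
  (1) If v has negative weight, each of v_0 and v_{-1} lowers weights by at least one, so an
  iterated product v_{n_1} ... v_{n_t} v has weight at most -1 - t and vanishes as soon as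
  -1 - t < n_0.

  (2) C_2(V) is stable under every mode u_n with n <= 0, applied from either side, and it
  contains u_0 u by skew symmetry. Since u_0 is a derivation of every product, an iterated
  product involving a 0-mode lies in C_2(V). A product of (-1)-modes of a vector of positive
  weight has weight at least t + 1, and C_2-cofiniteness puts every V_n of large weight into
  C_2(V): C_2(V) is graded, and a finite complement has bounded weights.
*)

lemma iter_prod_Nil [simp]: "iter_prod Y v [] x = x"
  by (simp add: iter_prod_def)

lemma iter_prod_Cons [simp]: "iter_prod Y v (n # ns) x = Y v n (iter_prod Y v ns x)"
  by (simp add: iter_prod_def)

lemma sum_atLeast0_eq_first:
  "(\<And>i. 1 \<le> i \<Longrightarrow> i \<le> K \<Longrightarrow> f i = 0) \<Longrightarrow> sum f {0..K} = f (0::nat)"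
  by (simp add: sum.atLeast_Suc_atMost)

lemma in_sr_if_iterates_eventually_in:
  assumes left: "\<And>x y s. x \<in> N \<Longrightarrow> s \<in> {0, -1} \<Longrightarrow> Y y s x \<in> M"
    and right: "\<And>x y s. x \<in> N \<Longrightarrow> s \<in> {0, -1} \<Longrightarrow> Y x s y \<in> M"
    and iterates: "\<And>ns. m \<le> length ns \<Longrightarrow> set ns \<subseteq> {0, -1} \<Longrightarrow> iter_prod Y v ns v \<in> N"
  shows "v \<in> sr Y M"
proof -
  have "v \<in> lsr Y M"
    unfolding lsr_def
  proof (intro CollectI allI exI[of _ m] impI)
    fix b and ns :: "int list" and s :: int
    assume "m \<le> length ns" "set ns \<subseteq> {0, -1}" "s \<in> {0, -1}"
    then show "Y b s (iter_prod Y v ns v) \<in> M"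
      by (intro left iterates)
  qed
  moreover have "v \<in> rsr Y M"
    unfolding rsr_def
  proof (intro CollectI allI exI[of _ m] impI)
    fix w and ns :: "int list" and n :: int
    assume "m \<le> length ns" "set ns \<subseteq> {0, -1}" "n \<in> {0, -1}"
    then show "Y (iter_prod Y v ns v) n w \<in> M"
      by (intro right iterates)
  qed
  ultimately show ?thesis
    unfolding sr_def by blast
qed

locale vertex_operator_algebra = vector_space sc for sc :: "complex \<Rightarrow> 'v::ab_group_add \<Rightarrow> 'v" +
  fixes Y :: "'v \<Rightarrow> int \<Rightarrow> 'v \<Rightarrow> 'v" and vac om :: 'v and cc :: complex and Vg :: "int \<Rightarrow> 'v set"
  assumes is_VOA: "is_VOA sc Y vac om cc Vg"
begin

lemma module_hom_mode_left: "module_hom sc sc (\<lambda>u. Y u n v)"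
  using is_VOA by (simp add: is_VOA_def module_hom_iff_linear)

lemma module_hom_mode_right: "module_hom sc sc (\<lambda>v. Y u n v)"
  using is_VOA by (simp add: is_VOA_def module_hom_iff_linear)

lemma mode_zero_left [simp]: "Y 0 n v = 0"
  using module_hom.zero[OF module_hom_mode_left] by simp

lemma mode_zero_right [simp]: "Y u n 0 = 0"
  using module_hom.zero[OF module_hom_mode_right] by simp

lemma mode_sum_left: "Y (sum f A) n v = (\<Sum>a\<in>A. Y (f a) n v)"
  using module_hom.sum[OF module_hom_mode_left] by simp

lemma mode_sum_right: "Y u n (sum f A) = (\<Sum>a\<in>A. Y u n (f a))"
  using module_hom.sum[OF module_hom_mode_right] by simp

lemma subspace_mode_left_vimage: "subspace S \<Longrightarrow> subspace {x. Y x n v \<in> S}"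
  using module_hom.subspace_vimage[OF module_hom_mode_left] by (simp add: vimage_def)

lemma subspace_mode_right_vimage: "subspace S \<Longrightarrow> subspace {x. Y u n x \<in> S}"
  using module_hom.subspace_vimage[OF module_hom_mode_right] by (simp add: vimage_def)

lemma vacuum_mode_nonneg: "0 \<le> n \<Longrightarrow> Y u n vac = 0"
  using is_VOA by (simp add: is_VOA_def)

lemma vacuum_mode_minus1: "Y u (-1) vac = u"
  using is_VOA by (simp add: is_VOA_def)

lemma mode_L_minus1: "Y (L_op Y om (-1) v) n w = sc (- of_int n) (Y v (n - 1) w)"
proof -
  have "\<forall>v n w. Y (L_op Y om (-1) v) n w = sc (- of_int n) (Y v (n - 1) w)"
    using is_VOA unfolding is_VOA_def by (elim conjE) assumption
  then show ?thesis by blast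
qed

lemma borcherds:
  "\<exists>K. (\<Sum>i\<in>{0..K}. sc (of_int p gchoose i) (Y (Y u (r + int i) v) (p + q - int i) w))
     = (\<Sum>i\<in>{0..K}. sc ((-1) ^ i * (of_int r gchoose i))
          (Y u (p + r - int i) (Y v (q + int i) w)
           - sc ((-1) powi r) (Y v (q + r - int i) (Y u (p + int i) w))))"
proof -
  have "\<forall>u v w p q r. \<exists>N. \<forall>K\<ge>N.
      (\<Sum>i\<in>{0..K}. sc (of_int p gchoose i) (Y (Y u (r + int i) v) (p + q - int i) w))
    = (\<Sum>i\<in>{0..K}. sc ((-1) ^ i * (of_int r gchoose i))
          (Y u (p + r - int i) (Y v (q + int i) w)
           - sc ((-1) powi r) (Y v (q + r - int i) (Y u (p + int i) w))))"
    using is_VOA unfolding is_VOA_def by (elim conjE) assumption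
  then show ?thesis by blast
qed

lemma commutator_formula:
  "\<exists>K. (\<Sum>i\<in>{0..K}. sc (of_int p gchoose i) (Y (Y u (int i) v) (p + q - int i) w))
     = Y u p (Y v q w) - Y v q (Y u p w)"
proof -
  obtain K where K:
    "(\<Sum>i\<in>{0..K}. sc (of_int p gchoose i) (Y (Y u (0 + int i) v) (p + q - int i) w))
     = (\<Sum>i\<in>{0..K}. sc ((-1) ^ i * (of_int 0 gchoose i))
          (Y u (p + 0 - int i) (Y v (q + int i) w)
           - sc ((-1) powi 0) (Y v (q + 0 - int i) (Y u (p + int i) w))))"
    using borcherds[of p u 0 v q w] by blast
  have "(\<Sum>i\<in>{0..K}. sc ((-1) ^ i * (of_int 0 gchoose i))
          (Y u (p + 0 - int i) (Y v (q + int i) w)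
           - sc ((-1) powi 0) (Y v (q + 0 - int i) (Y u (p + int i) w))))
        = Y u p (Y v q w) - Y v q (Y u p w)"
    by (subst sum_atLeast0_eq_first) (auto simp: gbinomial_0_left)
  with K have "(\<Sum>i\<in>{0..K}. sc (of_int p gchoose i) (Y (Y u (0 + int i) v) (p + q - int i) w))
      = Y u p (Y v q w) - Y v q (Y u p w)"
    by (rule trans)
  then show ?thesis
    by (intro exI[of _ K]) (simp only: add_0_left)
qed

lemma iterate_formula:
  "\<exists>K. Y (Y u r v) q w
     = (\<Sum>i\<in>{0..K}. sc ((-1) ^ i * (of_int r gchoose i))
          (Y u (r - int i) (Y v (q + int i) w)
           - sc ((-1) powi r) (Y v (q + r - int i) (Y u (int i) w))))"
proof -
  obtain K where K:
    "(\<Sum>i\<in>{0..K}. sc (of_int 0 gchoose i) (Y (Y u (r + int i) v) (0 + q - int i) w))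
     = (\<Sum>i\<in>{0..K}. sc ((-1) ^ i * (of_int r gchoose i))
          (Y u (0 + r - int i) (Y v (q + int i) w)
           - sc ((-1) powi r) (Y v (q + r - int i) (Y u (0 + int i) w))))"
    using borcherds[of 0 u r v q w] by blast
  have "(\<Sum>i\<in>{0..K}. sc (of_int 0 gchoose i) (Y (Y u (r + int i) v) (0 + q - int i) w))
        = Y (Y u r v) q w"
    by (subst sum_atLeast0_eq_first) (auto simp: gbinomial_0_left)
  from this[symmetric] K have "Y (Y u r v) q w
     = (\<Sum>i\<in>{0..K}. sc ((-1) ^ i * (of_int r gchoose i))
          (Y u (0 + r - int i) (Y v (q + int i) w)
           - sc ((-1) powi r) (Y v (q + r - int i) (Y u (0 + int i) w))))"
    by (rule trans)
  then show ?thesis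
    by (intro exI[of _ K]) (simp only: add_0_left)
qed

lemma zero_mode_derivation: "Y u 0 (Y v q w) = Y (Y u 0 v) q w + Y v q (Y u 0 w)"
proof -
  obtain K where K:
    "(\<Sum>i\<in>{0..K}. sc (of_int 0 gchoose i) (Y (Y u (int i) v) (0 + q - int i) w))
     = Y u 0 (Y v q w) - Y v q (Y u 0 w)"
    using commutator_formula[of 0 u v q w] by blast
  have "(\<Sum>i\<in>{0..K}. sc (of_int 0 gchoose i) (Y (Y u (int i) v) (0 + q - int i) w))
        = Y (Y u 0 v) q w"
    by (subst sum_atLeast0_eq_first) (auto simp: gbinomial_0_left)
  with K show ?thesis by (metis diff_add_cancel)
qed

subsection \<open>The subspace C_2(V)\<close>

lemma C2_eq_span: "C2 sc Y = span {Y u (-2) v | u v. True}"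
  by (simp add: C2_def)

lemma subspace_C2: "subspace (C2 sc Y)"
  by (simp add: C2_eq_span)

lemma C2_subset:
  assumes "subspace S" and "\<And>u v. Y u (-2) v \<in> S"
  shows "C2 sc Y \<subseteq> S"
  unfolding C2_eq_span by (rule span_minimal) (use assms in auto)

lemma mode_minus2_in_C2: "Y u (-2) v \<in> C2 sc Y"
  unfolding C2_eq_span by (rule span_base) blast

lemma mode_le_minus2_in_C2:
  assumes "n \<le> -2"
  shows "Y u n v \<in> C2 sc Y"
proof -
  have "Y u (- int k - 2) v \<in> C2 sc Y" for k
  proof (induction k arbitrary: u)
    case 0
    show ?case using mode_minus2_in_C2 by simp
  next
    case (Suc k)
    have "Y (L_op Y om (-1) u) (- int k - 2) v = sc (of_int (int k + 2)) (Y u (- int (Suc k) - 2) v)"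
      using mode_L_minus1[of u "- int k - 2" v] by (simp add: algebra_simps)
    moreover have "complex_of_int (int k + 2) \<noteq> 0"
      by (metis of_int_eq_0_iff add_nonneg_pos of_nat_0_le_iff zero_less_numeral order_less_irrefl)
    ultimately have "Y u (- int (Suc k) - 2) v
        = sc (1 / of_int (int k + 2)) (Y (L_op Y om (-1) u) (- int k - 2) v)"
      by simp
    then show ?case
      using Suc.IH subspace_scale[OF subspace_C2] by metis
  qed
  from this[of "nat (- n - 2)"] assms show ?thesis
    by simp
qed

(* Commutator formula at q = -2: every (y_i a)_{p-2-i} b has mode at most -2. *)
lemma mode_C2_generator_in_C2:
  assumes "p \<le> 0"
  shows "Y y p (Y a (-2) b) \<in> C2 sc Y"
proof -
  obtain K where K:
    "(\<Sum>i\<in>{0..K}. sc (of_int p gchoose i) (Y (Y y (int i) a) (p + -2 - int i) b))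
     = Y y p (Y a (-2) b) - Y a (-2) (Y y p b)"
    using commutator_formula[of p y a "-2" b] by blast
  have "(\<Sum>i\<in>{0..K}. sc (of_int p gchoose i) (Y (Y y (int i) a) (p + -2 - int i) b)) \<in> C2 sc Y"
    using assms
    by (intro subspace_sum[OF subspace_C2] subspace_scale[OF subspace_C2] mode_le_minus2_in_C2) auto
  with K have "Y y p (Y a (-2) b) - Y a (-2) (Y y p b) \<in> C2 sc Y"
    by simp
  then show ?thesis
    using subspace_add[OF subspace_C2 _ mode_minus2_in_C2] by (metis diff_add_cancel)
qed

(* Iterate formula at r = -2: every mode of a, and of b, on the right is at most -2. *)
lemma C2_generator_mode_in_C2:
  assumes "q \<le> 0"
  shows "Y (Y a (-2) b) q w \<in> C2 sc Y"
proof -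
  obtain K where K:
    "Y (Y a (-2) b) q w
     = (\<Sum>i\<in>{0..K}. sc ((-1) ^ i * (of_int (-2) gchoose i))
          (Y a (-2 - int i) (Y b (q + int i) w)
           - sc ((-1) powi (-2)) (Y b (q + -2 - int i) (Y a (int i) w))))"
    using iterate_formula[of a "-2" b q w] by blast
  show ?thesis
    unfolding K using assms
    by (intro subspace_sum[OF subspace_C2] subspace_scale[OF subspace_C2]
        subspace_diff[OF subspace_C2] mode_le_minus2_in_C2) auto
qed

lemma mode_C2_in_C2:
  assumes "x \<in> C2 sc Y" and "s \<le> 0"
  shows "Y y s x \<in> C2 sc Y"
proof -
  have "C2 sc Y \<subseteq> {x. Y y s x \<in> C2 sc Y}"
    using assms(2)
    by (intro C2_subset subspace_mode_right_vimage subspace_C2) (simp add: mode_C2_generator_in_C2)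
  with assms(1) show ?thesis
    by blast
qed

lemma C2_mode_in_C2:
  assumes "x \<in> C2 sc Y" and "s \<le> 0"
  shows "Y x s w \<in> C2 sc Y"
proof -
  have "C2 sc Y \<subseteq> {x. Y x s w \<in> C2 sc Y}"
    using assms(2)
    by (intro C2_subset subspace_mode_left_vimage subspace_C2) (simp add: C2_generator_mode_in_C2)
  with assms(1) show ?thesis
    by blast
qed

(* Borcherds identity at (p, q, r) = (-1, -1, 1) on the vacuum: all modes on the left are at
   most -2, and the right-hand side collapses to 2 u_0 u. *)
lemma zero_mode_self_in_C2: "Y u 0 u \<in> C2 sc Y"
proof -
  obtain K where K:
    "(\<Sum>i\<in>{0..K}. sc (of_int (-1) gchoose i) (Y (Y u (1 + int i) u) (-1 + -1 - int i) vac))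
     = (\<Sum>i\<in>{0..K}. sc ((-1) ^ i * (of_int 1 gchoose i))
          (Y u (-1 + 1 - int i) (Y u (-1 + int i) vac)
           - sc ((-1) powi 1) (Y u (-1 + 1 - int i) (Y u (-1 + int i) vac))))"
    using borcherds[of "-1" u 1 u "-1" vac] by blast
  have "(\<Sum>i\<in>{0..K}. sc (of_int (-1) gchoose i) (Y (Y u (1 + int i) u) (-1 + -1 - int i) vac))
        \<in> C2 sc Y"
    by (intro subspace_sum[OF subspace_C2] subspace_scale[OF subspace_C2] mode_le_minus2_in_C2) auto
  moreover have "(\<Sum>i\<in>{0..K}. sc ((-1) ^ i * (of_int 1 gchoose i))
          (Y u (-1 + 1 - int i) (Y u (-1 + int i) vac)
           - sc ((-1) powi 1) (Y u (-1 + 1 - int i) (Y u (-1 + int i) vac))))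
        = sc 2 (Y u 0 u)"
    using scale_left_distrib[of 1 1 "Y u 0 u"]
    by (subst sum_atLeast0_eq_first) (auto simp: vacuum_mode_nonneg vacuum_mode_minus1)
  ultimately have "sc 2 (Y u 0 u) \<in> C2 sc Y"
    using K by simp
  then have "sc (1 / 2) (sc 2 (Y u 0 u)) \<in> C2 sc Y"
    by (rule subspace_scale[OF subspace_C2])
  then show ?thesis
    by simp
qed

lemma zero_mode_iter_prod_in_C2:
  "\<forall>n\<in>set ns. n \<le> 0 \<Longrightarrow> Y u 0 (iter_prod Y u ns u) \<in> C2 sc Y"
proof (induction ns)
  case Nil
  show ?case using zero_mode_self_in_C2 by simp
next
  case (Cons n ns)
  have "Y u 0 (iter_prod Y u (n # ns) u)
      = Y (Y u 0 u) n (iter_prod Y u ns u) + Y u n (Y u 0 (iter_prod Y u ns u))"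
    by (simp add: zero_mode_derivation)
  moreover have "Y (Y u 0 u) n (iter_prod Y u ns u) \<in> C2 sc Y"
    using Cons.prems by (intro C2_mode_in_C2 zero_mode_self_in_C2) simp
  moreover have "Y u n (Y u 0 (iter_prod Y u ns u)) \<in> C2 sc Y"
    using Cons.prems by (intro mode_C2_in_C2[OF Cons.IH]) simp_all
  ultimately show ?case
    by (metis subspace_add[OF subspace_C2])
qed

lemma iter_prod_with_zero_mode_in_C2:
  "\<forall>n\<in>set ns. n \<le> 0 \<Longrightarrow> 0 \<in> set ns \<Longrightarrow> iter_prod Y u ns u \<in> C2 sc Y"
proof (induction ns)
  case Nil
  then show ?case by simp
next
  case (Cons n ns)
  show ?case
  proof (cases "0 \<in> set ns")
    case True
    with Cons show ?thesis by (auto intro: mode_C2_in_C2)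
  next
    case False
    with Cons.prems have "n = 0" by simp
    with Cons.prems show ?thesis by (simp add: zero_mode_iter_prod_in_C2)
  qed
qed

subsection \<open>Homogeneous components\<close>

lemma subspace_Vg: "subspace (Vg n)"
  using is_VOA by (simp add: is_VOA_def)

lemma mode_Vg: "u \<in> Vg k \<Longrightarrow> v \<in> Vg n \<Longrightarrow> Y u m v \<in> Vg (k + n - m - 1)"
proof -
  have "\<forall>k n m u v. u \<in> Vg k \<longrightarrow> v \<in> Vg n \<longrightarrow> Y u m v \<in> Vg (k + n - m - 1)"
    using is_VOA unfolding is_VOA_def by (elim conjE) assumption
  then show "u \<in> Vg k \<Longrightarrow> v \<in> Vg n \<Longrightarrow> Y u m v \<in> Vg (k + n - m - 1)"
    by blast
qed

definition graded_decomp :: "'v \<Rightarrow> (int \<Rightarrow> 'v) \<Rightarrow> bool" where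
  "graded_decomp v c \<longleftrightarrow>
     finite {n. c n \<noteq> 0} \<and> (\<forall>n. c n \<in> Vg n) \<and> v = (\<Sum>n\<in>{n. c n \<noteq> 0}. c n)"

lemma ex1_graded_decomp: "\<exists>!c. graded_decomp v c"
proof -
  have "\<forall>v. \<exists>!c::int \<Rightarrow> 'v. finite {n. c n \<noteq> 0} \<and> (\<forall>n. c n \<in> Vg n)
          \<and> v = (\<Sum>n\<in>{n. c n \<noteq> 0}. c n)"
    using is_VOA unfolding is_VOA_def by (elim conjE) assumption
  then show ?thesis
    unfolding graded_decomp_def by blast
qed

definition component :: "'v \<Rightarrow> int \<Rightarrow> 'v" where
  "component v = (THE c. graded_decomp v c)"

lemma graded_decomp_component: "graded_decomp v (component v)"
  unfolding component_def by (rule theI'[OF ex1_graded_decomp])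

lemma component_in_Vg: "component v n \<in> Vg n"
  using graded_decomp_component unfolding graded_decomp_def by blast

lemma finite_component_support: "finite {n. component v n \<noteq> 0}"
  using graded_decomp_component unfolding graded_decomp_def by blast

lemma sum_components:
  assumes "finite S" and "{n. component v n \<noteq> 0} \<subseteq> S"
  shows "sum (component v) S = v"
proof -
  have "sum (component v) S = (\<Sum>n\<in>{n. component v n \<noteq> 0}. component v n)"
    using assms by (intro sum.mono_neutral_right) auto
  also have "\<dots> = v"
    using graded_decomp_component unfolding graded_decomp_def by simp
  finally show ?thesis .
qed

lemma component_unique:
  assumes "finite S" and "\<And>n. c n \<in> Vg n" and "\<And>n. n \<notin> S \<Longrightarrow> c n = 0" and "sum c S = v"
  shows "component v = c"
proof -
  have support: "{n. c n \<noteq> 0} \<subseteq> S"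
    using assms(3) by blast
  then have "sum c S = (\<Sum>n\<in>{n. c n \<noteq> 0}. c n)"
    using assms(1) by (intro sum.mono_neutral_right) auto
  with assms support have "graded_decomp v c"
    unfolding graded_decomp_def by (auto intro: finite_subset)
  then show ?thesis
    unfolding component_def by (rule the1_equality[OF ex1_graded_decomp])
qed

lemma component_add: "component (x + y) n = component x n + component y n"
proof -
  let ?S = "{n. component x n \<noteq> 0} \<union> {n. component y n \<noteq> 0}"
  have "component (x + y) = (\<lambda>n. component x n + component y n)"
  proof (rule component_unique)
    show "finite ?S"
      by (simp add: finite_component_support)
    show "sum (\<lambda>n. component x n + component y n) ?S = x + y"
      by (simp add: sum.distrib sum_components finite_component_support)
  qed (auto intro: subspace_add[OF subspace_Vg] component_in_Vg)
  then show ?thesis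
    by simp
qed

lemma component_scale: "component (sc a x) n = sc a (component x n)"
proof -
  have "component (sc a x) = (\<lambda>n. sc a (component x n))"
  proof (rule component_unique)
    show "sum (\<lambda>n. sc a (component x n)) {n. component x n \<noteq> 0} = sc a x"
      by (simp add: scale_sum_right[symmetric] sum_components finite_component_support)
  qed (auto intro: subspace_scale[OF subspace_Vg] component_in_Vg finite_component_support)
  then show ?thesis
    by simp
qed

lemma component_zero: "component 0 n = 0"
  using component_scale[of 0 0 n] by simp

lemma component_homogeneous:
  assumes "x \<in> Vg m"
  shows "component x n = (if n = m then x else 0)"
proof -
  have "component x = (\<lambda>n. if n = m then x else 0)"
    by (rule component_unique[of "{m}"]) (auto simp: assms intro: subspace_0[OF subspace_Vg])
  then show ?thesis
    by simp
qed

lemma components_zero_imp_zero: "(\<And>n. component x n = 0) \<Longrightarrow> x = 0"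
  using sum_components[of "{}" x] by simp

definition Vg_sum :: "int set \<Rightarrow> 'v set" where
  "Vg_sum S = {v. \<forall>n. n \<notin> S \<longrightarrow> component v n = 0}"

lemma subspace_Vg_sum: "subspace (Vg_sum S)"
  unfolding subspace_def Vg_sum_def by (simp add: component_add component_scale component_zero)

lemma Vg_subset_Vg_sum: "n \<in> S \<Longrightarrow> Vg n \<subseteq> Vg_sum S"
  unfolding Vg_sum_def by (auto simp: component_homogeneous)

lemma span_Vg_subset_Vg_sum: "span (\<Union>n\<in>S. Vg n) \<subseteq> Vg_sum S"
  by (intro span_minimal subspace_Vg_sum UN_least Vg_subset_Vg_sum)

lemma Vg_sum_mono: "S \<subseteq> T \<Longrightarrow> Vg_sum S \<subseteq> Vg_sum T"
  unfolding Vg_sum_def by blast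

lemma Vg_sum_disjoint:
  assumes "x \<in> Vg_sum S" and "x \<in> Vg_sum T" and "S \<inter> T = {}"
  shows "x = 0"
proof (rule components_zero_imp_zero)
  fix n
  show "component x n = 0"
    using assms unfolding Vg_sum_def by (cases "n \<in> S") auto
qed

lemma Vg_sum_trivial:
  assumes "\<And>n. n \<in> S \<Longrightarrow> Vg n = {0}" and "x \<in> Vg_sum S"
  shows "x = 0"
proof (rule components_zero_imp_zero)
  fix n
  show "component x n = 0"
  proof (cases "n \<in> S")
    case True
    then show ?thesis
      using component_in_Vg[of x n] assms(1) by simp
  next
    case False
    then show ?thesis
      using assms(2) unfolding Vg_sum_def by simp
  qed
qed

lemma Vg_sum_bounded_above: "\<exists>T. v \<in> Vg_sum {..<T}"
proof -
  obtain B where "\<forall>n\<in>{n. component v n \<noteq> 0}. n \<le> B"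
    using bdd_above_finite[OF finite_component_support] unfolding bdd_above_def by blast
  then have "v \<in> Vg_sum {..<B + 1}"
    unfolding Vg_sum_def by (auto simp: not_less)
  then show ?thesis ..
qed

lemma finite_subset_Vg_sum_bounded_above: "finite F \<Longrightarrow> \<exists>T. F \<subseteq> Vg_sum {..<T}"
proof (induction F rule: finite_induct)
  case empty
  show ?case by simp
next
  case (insert v F)
  obtain T where "F \<subseteq> Vg_sum {..<T}"
    using insert.IH by blast
  moreover obtain T' where "v \<in> Vg_sum {..<T'}"
    using Vg_sum_bounded_above by blast
  ultimately have "insert v F \<subseteq> Vg_sum {..<max T T'}"
    using Vg_sum_mono[of "{..<T}" "{..<max T T'}"] Vg_sum_mono[of "{..<T'}" "{..<max T T'}"] by auto
  then show ?case
    by blast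
qed

lemma mode_eq_sum_components:
  "Y x s y = (\<Sum>a\<in>{n. component x n \<noteq> 0}. \<Sum>b\<in>{n. component y n \<noteq> 0}.
                Y (component x a) s (component y b))"
proof -
  have "Y x s y = Y (sum (component x) {n. component x n \<noteq> 0}) s
                    (sum (component y) {n. component y n \<noteq> 0})"
    by (simp only: sum_components[OF finite_component_support order_refl])
  then show ?thesis
    unfolding mode_sum_left by (simp only: mode_sum_right)
qed

lemma mode_Vg_sum:
  assumes "x \<in> Vg_sum A" and "y \<in> Vg_sum B" and "\<And>a b. a \<in> A \<Longrightarrow> b \<in> B \<Longrightarrow> a + b - s - 1 \<in> C"
  shows "Y x s y \<in> Vg_sum C"
  unfolding mode_eq_sum_components[of x s y]
proof (intro subspace_sum[OF subspace_Vg_sum])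
  fix a b
  assume "a \<in> {n. component x n \<noteq> 0}" and "b \<in> {n. component y n \<noteq> 0}"
  with assms(1,2) have "a \<in> A" and "b \<in> B"
    unfolding Vg_sum_def by auto
  then have "Vg (a + b - s - 1) \<subseteq> Vg_sum C"
    by (intro Vg_subset_Vg_sum assms(3))
  then show "Y (component x a) s (component y b) \<in> Vg_sum C"
    using mode_Vg[OF component_in_Vg component_in_Vg] by blast
qed

(* C_2(V) is graded: the homogeneous components of u_{-2} v are again of the form a_{-2} b. *)
lemma C2_split:
  assumes "x \<in> C2 sc Y"
  shows "\<exists>c d. x = c + d \<and> c \<in> C2 sc Y \<inter> Vg_sum S \<and> d \<in> C2 sc Y \<inter> Vg_sum (- S)"
proof -
  let ?P = "{c + d | c d. c \<in> C2 sc Y \<inter> Vg_sum S \<and> d \<in> C2 sc Y \<inter> Vg_sum (- S)}"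
  have zero: "0 \<in> C2 sc Y \<inter> Vg_sum T" for T
    by (simp add: subspace_0[OF subspace_C2] subspace_0[OF subspace_Vg_sum])
  have subspace_P: "subspace ?P"
    by (intro subspace_sums subspace_inter subspace_C2 subspace_Vg_sum)
  have "C2 sc Y \<subseteq> ?P"
  proof (rule C2_subset[OF subspace_P])
    fix a b
    have "Y (component a i) (-2) (component b j) \<in> ?P" for i j
    proof -
      let ?t = "Y (component a i) (-2) (component b j)"
      have "?t \<in> Vg (i + j + 1)"
        using mode_Vg[OF component_in_Vg[of a i] component_in_Vg[of b j], of "-2"]
        by (simp add: algebra_simps)
      then have "?t \<in> Vg_sum S \<or> ?t \<in> Vg_sum (- S)"
        using Vg_subset_Vg_sum[of "i + j + 1"] by (cases "i + j + 1 \<in> S") auto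
      then show ?thesis
      proof
        assume "?t \<in> Vg_sum S"
        then have "?t + 0 \<in> ?P"
          using mode_minus2_in_C2 zero by blast
        then show ?thesis
          by simp
      next
        assume "?t \<in> Vg_sum (- S)"
        then have "0 + ?t \<in> ?P"
          using mode_minus2_in_C2 zero by blast
        then show ?thesis
          by simp
      qed
    qed
    then show "Y a (-2) b \<in> ?P"
      unfolding mode_eq_sum_components[of a "-2" b] by (intro subspace_sum[OF subspace_P])
  qed
  with assms show ?thesis
    by blast
qed

lemma C2_cofinite_imp_high_weights_in_C2:
  assumes "C2_cofinite sc Y"
  shows "\<exists>T. Vg_sum {T..} \<subseteq> C2 sc Y"
proof -
  obtain F where "finite F" and F: "span (F \<union> C2 sc Y) = UNIV"
    using assms unfolding C2_cofinite_def by blast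
  then obtain T where "F \<subseteq> Vg_sum {..<T}"
    using finite_subset_Vg_sum_bounded_above by blast
  then have span_F: "span F \<subseteq> Vg_sum {..<T}"
    by (intro span_minimal subspace_Vg_sum)
  have "x \<in> C2 sc Y" if x: "x \<in> Vg_sum {T..}" for x
  proof -
    have "x \<in> span (F \<union> C2 sc Y)"
      using F by simp
    then obtain f c where "x = f + c" and "f \<in> span F" and "c \<in> C2 sc Y"
      unfolding span_Un span_eq_iff[THEN iffD2, OF subspace_C2] by blast
    moreover obtain c1 c2 where "c = c1 + c2" and "c1 \<in> C2 sc Y \<inter> Vg_sum {..<T}"
        and c2: "c2 \<in> C2 sc Y \<inter> Vg_sum {T..}"
      using C2_split[OF \<open>c \<in> C2 sc Y\<close>, of "{..<T}"] by auto
    ultimately have "x - c2 = f + c1" and "f \<in> Vg_sum {..<T}" and "c1 \<in> Vg_sum {..<T}"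
      using span_F by auto
    then have "x - c2 \<in> Vg_sum {..<T}"
      by (simp add: subspace_add[OF subspace_Vg_sum])
    moreover have "x - c2 \<in> Vg_sum {T..}"
      using c2 x by (simp add: subspace_diff[OF subspace_Vg_sum])
    ultimately have "x - c2 = 0"
      by (rule Vg_sum_disjoint) auto
    with c2 show ?thesis
      by simp
  qed
  then show ?thesis
    by blast
qed

subsection \<open>Weights of iterated products\<close>

lemma iter_prod_negative_weight:
  assumes "v \<in> Vg_sum {..-1}" and "\<forall>n\<in>set ns. -1 \<le> n"
  shows "iter_prod Y v ns v \<in> Vg_sum {..-1 - int (length ns)}"
  using assms(2)
proof (induction ns)
  case Nil
  show ?case using assms(1) by simp
next
  case (Cons n ns)
  then have "Y v n (iter_prod Y v ns v) \<in> Vg_sum {..-1 - int (length ns) - 1}"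
    by (intro mode_Vg_sum[OF assms(1)]) auto
  then show ?case
    by (simp add: algebra_simps)
qed

lemma iter_prod_positive_weight:
  assumes "u \<in> Vg_sum {1..}" and "\<forall>n\<in>set ns. n \<le> -1"
  shows "iter_prod Y u ns u \<in> Vg_sum {1 + int (length ns)..}"
  using assms(2)
proof (induction ns)
  case Nil
  show ?case using assms(1) by simp
next
  case (Cons n ns)
  then have "Y u n (iter_prod Y u ns u) \<in> Vg_sum {1 + int (length ns) + 1..}"
    by (intro mode_Vg_sum[OF assms(1)]) auto
  then show ?case
    by (simp add: algebra_simps)
qed

lemma negative_weight_in_sr:
  assumes "subspace M" and bottom: "\<forall>n<n0. Vg n = {0}" and v: "v \<in> Vg_sum {..-1}"
  shows "v \<in> sr Y M"
proof (rule in_sr_if_iterates_eventually_in[where N = "{0}" and m = "nat (- n0)"])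
  fix ns :: "int list"
  assume "nat (- n0) \<le> length ns" and "set ns \<subseteq> {0, -1}"
  moreover from this have "\<forall>n\<in>set ns. -1 \<le> n"
    by auto
  ultimately have "iter_prod Y v ns v \<in> Vg_sum {..-1 - int (length ns)}"
    and "\<forall>n\<in>{..-1 - int (length ns)}. Vg n = {0}"
    using iter_prod_negative_weight[OF v] bottom by auto
  then show "iter_prod Y v ns v \<in> {0}"
    using Vg_sum_trivial by blast
qed (use subspace_0[OF assms(1)] in auto)

lemma positive_weight_in_sr:
  assumes "C2_cofinite sc Y" and C2_M: "C2 sc Y \<subseteq> M" and u: "u \<in> Vg_sum {1..}"
  shows "u \<in> sr Y M"
proof -
  obtain T where T: "Vg_sum {T..} \<subseteq> C2 sc Y"
    using C2_cofinite_imp_high_weights_in_C2[OF assms(1)] by blast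
  show ?thesis
  proof (rule in_sr_if_iterates_eventually_in[where N = "C2 sc Y" and m = "nat T"])
    fix ns :: "int list"
    assume length: "nat T \<le> length ns" and ns: "set ns \<subseteq> {0, -1}"
    show "iter_prod Y u ns u \<in> C2 sc Y"
    proof (cases "0 \<in> set ns")
      case True
      with ns show ?thesis
        by (intro iter_prod_with_zero_mode_in_C2) auto
    next
      case False
      with ns have "iter_prod Y u ns u \<in> Vg_sum {1 + int (length ns)..}"
        by (intro iter_prod_positive_weight[OF u]) auto
      also have "\<dots> \<subseteq> Vg_sum {T..}"
        using length by (intro Vg_sum_mono) auto
      finally show ?thesis
        using T by blast
    qed
  next
    fix x y and s :: int
    assume "x \<in> C2 sc Y" and "s \<in> {0, -1}"
    then show "Y y s x \<in> M" and "Y x s y \<in> M"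
      using C2_M mode_C2_in_C2[of x s y] C2_mode_in_C2[of x s y] by auto
  qed
qed

end

lemma vertex_operator_algebraI:
  assumes "is_VOA sc Y vac om cc Vg"
  shows "vertex_operator_algebra sc Y vac om cc Vg"
proof (rule vertex_operator_algebra.intro)
  show "vector_space sc"
    using assms unfolding is_VOA_def by (elim conjE) assumption
qed (rule vertex_operator_algebra_axioms.intro[OF assms])

theorem mainTheorem10:
  fixes sc :: "complex \<Rightarrow> 'v::ab_group_add \<Rightarrow> 'v"
    and Y :: "'v \<Rightarrow> int \<Rightarrow> 'v \<Rightarrow> 'v"
    and vac om :: 'v and cc :: complex and Vg :: "int \<Rightarrow> 'v set"
    and M :: "'v set"
  assumes VOA: "is_VOA sc Y vac om cc Vg"
    and M: "module.subspace sc M"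
  shows "(\<forall>n0. n0 < 0 \<and> Vg n0 \<noteq> {0} \<and> (\<forall>n<n0. Vg n = {0}) \<longrightarrow>
            (\<forall>v \<in> module.span sc (\<Union>n\<in>{n0..-1}. Vg n). v \<in> sr Y M) \<and> sr Y M \<noteq> {0})
       \<and> (C2_cofinite sc Y \<and> C2 sc Y \<subseteq> M \<longrightarrow>
            (\<forall>k::int. \<forall>u. k > 0 \<and> u \<in> module.span sc (\<Union>i\<in>{1..k}. Vg i) \<longrightarrow> u \<in> sr Y M))"
proof -
  interpret vertex_operator_algebra sc Y vac om cc Vg
    using VOA by (rule vertex_operator_algebraI)
  show ?thesis
  proof (intro conjI allI impI ballI)
    fix n0 :: int and v
    assume n0: "n0 < 0 \<and> Vg n0 \<noteq> {0} \<and> (\<forall>n<n0. Vg n = {0})"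
      and "v \<in> span (\<Union>n\<in>{n0..-1}. Vg n)"
    then have "v \<in> Vg_sum {..-1}"
      using span_Vg_subset_Vg_sum Vg_sum_mono[of "{n0..-1}" "{..-1}"] by auto
    with n0 show "v \<in> sr Y M"
      by (intro negative_weight_in_sr[OF M, of n0]) auto
  next
    fix n0 :: int
    assume n0: "n0 < 0 \<and> Vg n0 \<noteq> {0} \<and> (\<forall>n<n0. Vg n = {0})"
    then obtain w where "w \<in> Vg n0" and "w \<noteq> 0"
      using subspace_0[OF subspace_Vg, of n0] by blast
    with n0 have "w \<in> sr Y M"
      using Vg_subset_Vg_sum[of n0 "{..-1}"] negative_weight_in_sr[OF M] by auto
    with \<open>w \<noteq> 0\<close> show "sr Y M \<noteq> {0}"
      by blast
  next
    fix k :: int and u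
    assume "C2_cofinite sc Y \<and> C2 sc Y \<subseteq> M" and "0 < k \<and> u \<in> span (\<Union>i\<in>{1..k}. Vg i)"
    moreover from this have "u \<in> Vg_sum {1..}"
      using span_Vg_subset_Vg_sum Vg_sum_mono[of "{1..k}" "{1..}"] by auto
    ultimately show "u \<in> sr Y M"
      by (intro positive_weight_in_sr) auto
  qed
qed

end
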